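(* Let $\epsilon>0$. Then, unconditionally, for every complex $s$ with $\Re(s)>1$, $$\int_0^1 f_\epsilon(u)\,u^{s-1}\,du = \frac{1}{\zeta(1+\epsilon)}\,\frac{1}{s-1} - \frac{1}{\zeta(s+\epsilon)}\,\frac{\zeta(s)}{s}.$$
   Context: $\mu$ is the Möbius function and $\zeta$ the Riemann zeta function. For real $x$, $\{x\}=x-[x]$ denotes the fractional part. For $\epsilon>0$, $f_\epsilon$ is the function on $(0,\infty)$ defined pointwise by $f_\epsilon(t)=\sum_{n=1}^\infty \frac{\mu(n)}{n^\epsilon}\left\{\frac1{nt}\right\}$ (absolutely convergent since $\{1/nt\}\le 1/nt$); it satisfies $|f_\epsilon(t)|\le \zeta(1+\epsilon)/t$. *)

theory Defs
  imports "HOL-Analysis.Analysis" "HOL-Computational_Algebra.Squarefree"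
begin

definition moebius_mu :: "nat \<Rightarrow> real" where
  "moebius_mu n = (if n = 0 \<or> \<not> squarefree n then 0
                   else (-1) ^ card (prime_factors n))"

text \<open>Riemann zeta function in the half-plane Re s > 1, via its Dirichlet series
  (only used there).\<close>
definition zeta :: "complex \<Rightarrow> complex" where
  "zeta s = (\<Sum>n. 1 / (of_nat (Suc n)) powr s)"

definition f_eps :: "real \<Rightarrow> real \<Rightarrow> real" where
  "f_eps \<epsilon> t = (\<Sum>n. moebius_mu (Suc n) / real (Suc n) powr \<epsilon>
                        * frac (1 / (real (Suc n) * t)))"

end

theory Submission
  imports Defs
begin

text \<open>
  Writing \<open>{x} = x - \<lfloor>x\<rfloor>\<close> and \<open>\<lfloor>x\<rfloor> = #{k \<ge> 1. k \<le> x}\<close>, the floor part of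
  \<open>\<integral>\<^sub>0\<^sup>1 {1/(m u)} u^(s-1) du\<close> is a sum over \<open>k\<close> of integrals of \<open>u^(s-1)\<close> over
  \<open>[0, 1/(m k)]\<close>; this gives \<open>1/(m (s-1)) - \<zeta>(s)/(m^s s)\<close> for \<open>m \<ge> 1\<close> and \<open>Re s > 1\<close>.
  Since \<open>\<Sum> |\<mu>(n)| n^(-1-\<epsilon>)\<close> converges, the series defining \<open>f_eps\<close> may be integrated
  term by term (dominated convergence), and the resulting Dirichlet series are evaluated with
  \<open>\<Sum> \<mu>(n) n^(-w) = 1/\<zeta>(w)\<close>, the Dirichlet-convolution identity \<open>\<mu> * 1 = \<delta>\<close>.
\<close>

section \<open>The Moebius function\<close>

lemma sum_minus_one_power_card_Pow:
  assumes "finite S" "S \<noteq> {}"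
  shows "(\<Sum>T\<in>Pow S. (-1::real) ^ card T) = 0"
proof (rule sum_alternating_cancels)
  have "card {T. T \<subseteq> S \<and> {} \<subseteq> T \<and> even (card T)} = card {T. T \<subseteq> S \<and> {} \<subseteq> T \<and> odd (card T)}"
    using assms by (intro card_subsupersets_even_odd) auto
  then show "card {T. T \<in> Pow S \<and> even (card T)} = card {T. T \<in> Pow S \<and> odd (card T)}"
    by simp
qed (use assms in simp)

lemma
  fixes S :: "nat set"
  assumes "finite S" "\<And>p. p \<in> S \<Longrightarrow> prime p"
  shows prime_factors_prod_primes: "prime_factors (\<Prod>S) = S"
    and squarefree_prod_primes: "squarefree (\<Prod>S)"
proof -
  have "0 \<notin> id ` S"
    using assms(2) by force
  then show "prime_factors (\<Prod>S) = S"
    using prime_factors_prod[OF assms(1), of id] assms(2) by (auto simp: prime_prime_factors)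
  show "squarefree (\<Prod>S)"
    using assms by (intro squarefree_prod_coprime) (auto simp: primes_coprime squarefree_prime)
qed

lemma prod_prime_factors_dvd:
  fixes n :: nat
  assumes "n \<noteq> 0"
  shows "\<Prod>(prime_factors n) dvd n"
proof -
  have "(\<Prod>p\<in>prime_factors n. p) dvd (\<Prod>p\<in>prime_factors n. p ^ multiplicity p n)"
    by (intro prod_dvd_prod) (auto simp: prime_factors_multiplicity dvd_power)
  then show ?thesis
    using prod_prime_factors[OF assms] by simp
qed

lemma prod_prime_factors_squarefree:
  fixes n :: nat
  assumes "squarefree n"
  shows "\<Prod>(prime_factors n) = n"
proof -
  have "n \<noteq> 0"
    using assms by (metis not_squarefree_0)
  with assms have "(\<Prod>p\<in>prime_factors n. p ^ multiplicity p n) = (\<Prod>p\<in>prime_factors n. p)"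
    by (intro prod.cong) (auto simp: squarefree_factorial_semiring')
  then show ?thesis
    using prod_prime_factors[OF \<open>n \<noteq> 0\<close>] by simp
qed

lemma moebius_divisor_sum:
  fixes n :: nat
  assumes "n > 0"
  shows "(\<Sum>d | d dvd n. moebius_mu d) = (if n = 1 then 1 else 0)"
proof -
  let ?P = "prime_factors n"
  have "(\<Sum>d | d dvd n. moebius_mu d) = (\<Sum>d | d dvd n \<and> squarefree d. moebius_mu d)"
    using assms by (intro sum.mono_neutral_right) (auto simp: moebius_mu_def)
  also have "\<dots> = (\<Sum>d | d dvd n \<and> squarefree d. (-1) ^ card (prime_factors d))"
    by (intro sum.cong) (auto simp: moebius_mu_def intro: gr0I)
  also have "\<dots> = (\<Sum>T\<in>Pow ?P. (-1) ^ card T)"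
  proof (rule sum.reindex_bij_witness[of _ "\<lambda>T. \<Prod>T" prime_factors])
    fix T assume T: "T \<in> Pow ?P"
    then have "finite T" and primes: "\<And>p. p \<in> T \<Longrightarrow> prime p"
      by (auto intro: finite_subset)
    then show "prime_factors (\<Prod>T) = T"
      by (rule prime_factors_prod_primes)
    have "\<Prod>T dvd \<Prod>?P"
      using T by (intro prod_dvd_prod_subset) auto
    also have "\<Prod>?P dvd n"
      using assms by (intro prod_prime_factors_dvd) auto
    finally show "\<Prod>T \<in> {d. d dvd n \<and> squarefree d}"
      using squarefree_prod_primes[OF \<open>finite T\<close> primes] by simp
  next
    fix d assume d: "d \<in> {d. d dvd n \<and> squarefree d}"
    then show "\<Prod>(prime_factors d) = d"
      by (auto intro: prod_prime_factors_squarefree)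
    show "prime_factors d \<in> Pow ?P"
      using d assms by (auto intro: dvd_trans simp: prime_factors_dvd)
  qed simp
  also have "\<dots> = (if n = 1 then 1 else 0)"
  proof (cases "n = 1")
    case False
    then obtain p where "prime p" "p dvd n"
      using prime_factor_nat by blast
    then have "p \<in> ?P"
      using assms by (intro prime_factorsI) auto
    then have "?P \<noteq> {}"
      by blast
    then show ?thesis
      using sum_minus_one_power_card_Pow[of ?P] False by simp
  qed simp
  finally show ?thesis .
qed

section \<open>Dirichlet series of \<open>\<zeta>\<close> and \<open>1/\<zeta>\<close>\<close>

lemma summable_Suc_powr_neg:
  assumes "a > 1"
  shows "summable (\<lambda>n. real (Suc n) powr - a)"
proof -
  have "summable (\<lambda>n. real n powr - a)"
    using assms by (subst summable_real_powr_iff) auto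
  then show ?thesis
    by (subst summable_Suc_iff)
qed

lemma summable_norm_inverse_nat_powr:
  assumes "Re w > 1"
  shows "summable (\<lambda>n. norm (1 / of_nat (Suc n) powr w :: complex))"
  using summable_Suc_powr_neg[OF assms]
  by (simp add: norm_divide norm_powr_real_powr powr_minus_divide del: of_nat_Suc)

lemma zeta_sums:
  assumes "Re w > 1"
  shows "(\<lambda>n. 1 / of_nat (Suc n) powr w) sums zeta w"
  unfolding zeta_def using summable_norm_inverse_nat_powr[OF assms]
  by (rule summable_sums[OF summable_norm_cancel])

lemma has_sum_iff_sums_Suc:
  fixes f :: "nat \<Rightarrow> 'a :: banach"
  assumes "summable (\<lambda>n. norm (f (Suc n)))"
  shows "(f has_sum S) {0<..} \<longleftrightarrow> (\<lambda>n. f (Suc n)) sums S"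
proof -
  have "(f has_sum S) {0<..} \<longleftrightarrow> ((\<lambda>n. f (Suc n)) has_sum S) UNIV"
    by (simp add: greaterThan_0 has_sum_reindex o_def)
  also have "\<dots> \<longleftrightarrow> (\<lambda>n. f (Suc n)) sums S"
    using assms by (auto intro: norm_summable_imp_has_sum has_sum_imp_sums)
  finally show ?thesis .
qed

lemma zeta_has_sum:
  assumes "Re w > 1"
  shows "((\<lambda>n. 1 / of_nat n powr w) has_sum zeta w) {0<..}"
  using summable_norm_inverse_nat_powr[OF assms] zeta_sums[OF assms]
  by (subst has_sum_iff_sums_Suc) auto

lemma has_sum_dirichlet_convolution:
  fixes a b :: "nat \<Rightarrow> complex"
  assumes a: "(a has_sum A) {0<..}" and b: "(b has_sum B) {0<..}"
  shows "((\<lambda>n. \<Sum>d | d dvd n. a d * b (n div d)) has_sum A * B) {0<..}"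
proof -
  let ?P = "{0<..} :: nat set"
  let ?T = "Sigma ?P (\<lambda>n. {d. d dvd n})"
  have "(\<lambda>n. norm (a n)) summable_on ?P" "(\<lambda>n. norm (b n)) summable_on ?P"
    using a b by (auto simp flip: summable_on_iff_abs_summable_on_complex intro: has_sum_imp_summable)
  then have "(\<lambda>x. norm (case x of (n, m) \<Rightarrow> a n * b m)) summable_on ?P \<times> ?P"
    by (subst Infinite_Sum.abs_summable_on_Sigma_iff)
       (auto intro!: summable_on_cmult_left summable_on_cmult_right
             simp: norm_mult infsum_cmult_right' infsum_nonneg)
  then have "((\<lambda>(n, m). a n * b m) has_sum A * B) (?P \<times> ?P)"
    by (intro has_sum_SigmaI[where g = "\<lambda>n. a n * B"] has_sum_cmult_left[OF a])
       (auto intro: has_sum_cmult_right[OF b] simp: summable_on_iff_abs_summable_on_complex)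
  also have "?this \<longleftrightarrow> ((\<lambda>(n, d). a d * b (n div d)) has_sum A * B) ?T"
    by (rule has_sum_reindex_bij_witness[where j = "\<lambda>(n, m). (n * m, n)" and i = "\<lambda>(n, d). (d, n div d)"])
       (auto intro!: gr0I dest: dvd_div_eq_0_iff)
  finally have "((\<lambda>(n, d). a d * b (n div d)) has_sum A * B) ?T" .
  then show ?thesis
    by (rule has_sum_SigmaD) (auto intro: has_sum_finite)
qed

lemma moebius_has_sum:
  assumes "Re w > 1"
  shows "((\<lambda>n. of_real (moebius_mu n) / of_nat n powr w :: complex) has_sum 1 / zeta w) {0<..}"
proof -
  let ?a = "\<lambda>n. of_real (moebius_mu n) / of_nat n powr w :: complex"
  let ?b = "\<lambda>n. 1 / of_nat n powr w :: complex"
  have b: "(?b has_sum zeta w) {0<..}"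
    using zeta_has_sum[OF assms] .
  then have "(\<lambda>n. norm (?b n)) summable_on {0<..}"
    by (auto simp flip: summable_on_iff_abs_summable_on_complex intro: has_sum_imp_summable)
  moreover have "norm (?a n) \<le> norm (?b n)" for n
    by (simp add: norm_divide divide_right_mono moebius_mu_def)
  ultimately have "(\<lambda>n. norm (?a n)) summable_on {0<..}"
    by (rule Infinite_Sum.abs_summable_on_comparison_test)
  then have "?a summable_on {0<..}"
    by (simp add: summable_on_iff_abs_summable_on_complex)
  then obtain A where a: "(?a has_sum A) {0<..}"
    by (auto simp: summable_on_def)
  have convolution_unit: "(\<Sum>d | d dvd n. ?a d * ?b (n div d)) = (if n = 1 then 1 else 0)" if "n > 0" for n
  proof -
    have "?a d * ?b (n div d) = of_real (moebius_mu d) / of_nat n powr w" if "d dvd n" for d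
      using that by (auto elim!: dvdE simp: powr_times_real)
    then have "(\<Sum>d | d dvd n. ?a d * ?b (n div d)) = (\<Sum>d | d dvd n. of_real (moebius_mu d) / of_nat n powr w)"
      by (intro sum.cong) auto
    also have "\<dots> = of_real (\<Sum>d | d dvd n. moebius_mu d) / of_nat n powr w"
      by (simp add: sum_divide_distrib)
    also have "\<dots> = (if n = 1 then 1 else 0)"
      using moebius_divisor_sum[OF that] by simp
    finally show ?thesis .
  qed
  have "((\<lambda>n. \<Sum>d | d dvd n. ?a d * ?b (n div d)) has_sum A * zeta w) {0<..}"
    using a b by (rule has_sum_dirichlet_convolution)
  also have "?this \<longleftrightarrow> ((\<lambda>n::nat. if n = 1 then 1 else 0) has_sum A * zeta w) {0<..}"
    using convolution_unit by (intro has_sum_cong) simp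
  finally have "((\<lambda>n::nat. if n = 1 then 1 else 0) has_sum A * zeta w) {0<..}" .
  moreover have "((\<lambda>n::nat. if n = 1 then 1 else 0 :: complex) has_sum 1) {0<..}"
    by (rule has_sum_finite_neutralI[where B = "{1}"]) auto
  ultimately have "A * zeta w = 1"
    by (rule has_sum_unique)
  then have "A = 1 / zeta w"
    by (auto simp: eq_divide_eq)
  then show ?thesis
    using a by simp
qed

lemma moebius_sums:
  assumes "Re w > 1"
  shows "(\<lambda>n. of_real (moebius_mu (Suc n)) / of_nat (Suc n) powr w :: complex) sums (1 / zeta w)"
proof -
  have "norm (of_real (moebius_mu (Suc n)) / of_nat (Suc n) powr w :: complex)
          \<le> norm (1 / of_nat (Suc n) powr w :: complex)" for n
    by (simp add: norm_divide divide_right_mono moebius_mu_def)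
  then have "summable (\<lambda>n. norm (of_real (moebius_mu (Suc n)) / of_nat (Suc n) powr w :: complex))"
    by (intro summable_comparison_test'[OF summable_norm_inverse_nat_powr[OF assms]]) auto
  from has_sum_iff_sums_Suc[OF this] show ?thesis
    using moebius_has_sum[OF assms] by simp
qed

section \<open>Integrals involving fractional parts\<close>

lemma of_real_inverse_powr:
  assumes "x > 0"
  shows "complex_of_real (1 / x) powr s = 1 / of_real x powr s"
proof -
  have "ln (1 / complex_of_real x) = - ln (of_real x)"
    using assms Ln_inverse[of "complex_of_real x"] by (simp add: complex_nonpos_Reals_iff inverse_eq_divide)
  with assms show ?thesis
    by (simp add: powr_def exp_minus inverse_eq_divide)
qed

lemma has_integral_cpow_from_0:
  fixes z :: complex
  assumes "Re z > -1" and "c \<ge> 0"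
  shows "((\<lambda>u. of_real u powr z) has_integral of_real c powr (z + 1) / (z + 1)) {0..c}"
proof -
  have "z + 1 \<noteq> 0"
    using assms(1) by (auto simp: complex_eq_iff)
  then have "((\<lambda>u. of_real u powr z) has_integral
               of_real c powr (z + 1) / (z + 1) - of_real 0 powr (z + 1) / (z + 1)) {0..c}"
    using assms
    by (intro fundamental_theorem_of_calculus_interior)
       (auto intro!: continuous_intros derivative_eq_intros has_vector_derivative_real_field
             simp: complex_nonpos_Reals_iff)
  then show ?thesis
    by simp
qed

lemma has_integral_cpow_upto:
  fixes z :: complex
  assumes "Re z > -1" and "0 \<le> c" "c \<le> 1"
  shows "((\<lambda>u. if u \<le> c then of_real u powr z else 0) has_integral of_real c powr (z + 1) / (z + 1)) {0..1}"
proof -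
  have "((\<lambda>u. if u \<in> {0..c} then of_real u powr z else 0) has_integral of_real c powr (z + 1) / (z + 1)) {0..1}"
    using has_integral_cpow_from_0[OF assms(1,2)] assms(3) by (subst has_integral_restrict) auto
  then show ?thesis
    by (rule has_integral_eq[rotated]) simp
qed

lemma has_integral_powr_upto:
  fixes a c :: real
  assumes "a > -1" and "0 \<le> c" "c \<le> 1"
  shows "((\<lambda>u. if u \<le> c then u powr a else 0) has_integral c powr (a + 1) / (a + 1)) {0..1}"
proof -
  have "((\<lambda>u. if u \<in> {0..c} then u powr a else 0) has_integral c powr (a + 1) / (a + 1)) {0..1}"
    using has_integral_powr_from_0[OF assms(1,2)] assms(3) by (subst has_integral_restrict) auto
  then show ?thesis
    by (rule has_integral_eq[rotated]) simp
qed

lemma floor_sums: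
  assumes "X \<ge> 0"
  shows "(\<lambda>k. if real (Suc k) \<le> X then x else 0) sums (of_int \<lfloor>X\<rfloor> * x :: 'a :: real_normed_algebra_1)"
proof -
  have "real (Suc k) \<le> X \<longleftrightarrow> k \<in> {..<nat \<lfloor>X\<rfloor>}" for k
    by (simp add: le_floor_iff flip: of_nat_Suc) linarith
  moreover have "(\<lambda>k. if k \<in> {..<nat \<lfloor>X\<rfloor>} then x else 0) sums (\<Sum>k<nat \<lfloor>X\<rfloor>. x)"
    by (rule sums_If_finite_set) simp
  ultimately show ?thesis
    using assms by (simp add: of_nat_nat)
qed

lemma floor_inv_mult_powr_sums:
  fixes z :: "'a :: {ln, real_normed_field}"
  assumes "m > 0" and "u \<ge> 0"
  shows "(\<lambda>k. if u \<le> 1 / (real m * real (Suc k)) then of_real u powr z else 0)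
           sums (of_int \<lfloor>1 / (real m * u)\<rfloor> * of_real u powr z)"
proof (cases "u = 0")
  case False
  with assms have "u > 0"
    by simp
  have "u \<le> 1 / (real m * real (Suc k)) \<longleftrightarrow> u * (real m * real (Suc k)) \<le> 1" for k
    using assms by (simp add: pos_le_divide_eq del: of_nat_Suc)
  also have "\<dots> k \<longleftrightarrow> real (Suc k) \<le> 1 / (real m * u)" for k
    using \<open>u > 0\<close> assms by (simp add: pos_le_divide_eq mult_ac del: of_nat_Suc)
  finally show ?thesis
    using floor_sums[of "1 / (real m * u)"] \<open>u > 0\<close> by simp
qed simp \<comment> \<open>at \<open>u = 0\<close> both sides vanish, as \<open>1 / 0 = 0\<close> and \<open>0 powr z = 0\<close>\<close>

lemma sums_zeta_div_powr:
  assumes "m > 0" and "Re s > 1"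
  shows "(\<lambda>k. complex_of_real (1 / (real m * real (Suc k))) powr s) sums (zeta s / of_nat m powr s)"
proof -
  have "complex_of_real (1 / (real m * real (Suc k))) powr s = 1 / of_nat m powr s * (1 / of_nat (Suc k) powr s)"
    for k
  proof -
    have "complex_of_real (1 / (real m * real (Suc k))) powr s = 1 / (of_nat m * of_nat (Suc k) :: complex) powr s"
      using assms(1) of_real_inverse_powr[of "real m * real (Suc k)" s] by simp
    also have "(of_nat m * of_nat (Suc k) :: complex) powr s = of_nat m powr s * of_nat (Suc k) powr s"
      by (rule powr_times_real) auto
    finally show ?thesis
      by simp
  qed
  then show ?thesis
    using sums_mult[OF zeta_sums[OF assms(2)], of "1 / of_nat m powr s"] by simp
qed

lemma has_integral_suminf:
  fixes f :: "nat \<Rightarrow> 'a :: euclidean_space \<Rightarrow> 'b :: euclidean_space"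
  assumes abs_int: "\<And>n. f n absolutely_integrable_on S"
    and int: "\<And>n. (f n has_integral I n) S"
    and summable_pointwise: "\<And>x. x \<in> S \<Longrightarrow> summable (\<lambda>n. norm (f n x))"
    and summable_integrals: "summable (\<lambda>n. integral S (\<lambda>x. norm (f n x)))"
  shows "((\<lambda>x. \<Sum>n. f n x) has_integral (\<Sum>n. I n)) S"
proof -
  define g where "g n x = indicator S x *\<^sub>R f n x" for n x
  have g_int: "integrable lebesgue (g n)" for n
    using abs_int[of n] unfolding set_integrable_def g_def by simp
  have "AE x in lebesgue. summable (\<lambda>n. norm (g n x))"
    using summable_pointwise by (intro AE_I2) (auto simp: g_def indicator_def)
  moreover have "(\<integral>x. norm (g n x) \<partial>lebesgue) = integral S (\<lambda>x. norm (f n x))" for n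
  proof -
    have "(\<integral>x. norm (g n x) \<partial>lebesgue) = (LINT x:S | lebesgue. norm (f n x))"
      unfolding set_lebesgue_integral_def g_def
      by (intro Bochner_Integration.integral_cong) (auto simp: indicator_def)
    also have "\<dots> = integral S (\<lambda>x. norm (f n x))"
      using absolutely_integrable_norm[OF abs_int[of n]]
      by (intro set_lebesgue_integral_eq_integral) (simp add: o_def)
    finally show ?thesis .
  qed
  with summable_integrals have "summable (\<lambda>n. \<integral>x. norm (g n x) \<partial>lebesgue)"
    by simp
  ultimately have "integrable lebesgue (\<lambda>x. \<Sum>n. g n x)"
    and "(\<integral>x. (\<Sum>n. g n x) \<partial>lebesgue) = (\<Sum>n. integral\<^sup>L lebesgue (g n))"
    using g_int by (blast intro: integrable_suminf integral_suminf)+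
  moreover have "(\<lambda>x. \<Sum>n. g n x) = (\<lambda>x. indicator S x *\<^sub>R (\<Sum>n. f n x))"
    by (auto simp: g_def indicator_def fun_eq_iff)
  moreover have "integral\<^sup>L lebesgue (g n) = I n" for n
  proof -
    have "integral\<^sup>L lebesgue (g n) = integral S (f n)"
      using abs_int[of n] unfolding g_def[abs_def] set_lebesgue_integral_def[symmetric]
      by (rule set_lebesgue_integral_eq_integral)
    then show ?thesis
      using int[of n] by (simp add: integral_unique)
  qed
  ultimately have "set_integrable lebesgue S (\<lambda>x. \<Sum>n. f n x)"
    and "(LINT x:S | lebesgue. (\<Sum>n. f n x)) = (\<Sum>n. I n)"
    by (simp_all add: set_integrable_def set_lebesgue_integral_def)
  then show ?thesis
    using has_integral_set_lebesgue by fastforce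
qed

lemma has_integral_floor_inv_mult:
  fixes s :: complex
  assumes m: "m > 0" and s: "Re s > 1"
  shows "((\<lambda>u. of_int \<lfloor>1 / (real m * u)\<rfloor> * of_real u powr (s - 1))
           has_integral zeta s / (of_nat m powr s * s)) {0..1}"
proof -
  define c where "c k = 1 / (real m * real (Suc k))" for k
  define h where "h k u = (if u \<le> c k then complex_of_real u powr (s - 1) else 0)" for k u
  have c_pos: "c k > 0" for k
    using m by (simp add: c_def)
  have c_le: "c k \<le> 1 / real (Suc k)" for k
    using m unfolding c_def by (intro divide_left_mono) auto
  have c_le_1: "c k \<le> 1" for k
    using c_le[of k] order.trans by fastforce
  have h_int: "(h k has_integral of_real (c k) powr s / s) {0..1}" for k
    using has_integral_cpow_upto[of "s - 1" "c k"] s c_pos[of k] c_le_1[of k] by (simp add: h_def[abs_def])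
  have norm_h_int: "((\<lambda>u. norm (h k u)) has_integral c k powr Re s / Re s) {0..1}" for k
  proof -
    have "((\<lambda>u. if u \<le> c k then u powr (Re s - 1) else 0) has_integral c k powr Re s / Re s) {0..1}"
      using has_integral_powr_upto[of "Re s - 1" "c k"] s c_pos[of k] c_le_1[of k] by simp
    then show ?thesis
      by (rule has_integral_eq[rotated]) (auto simp: h_def norm_powr_real_powr)
  qed
  have h_sums: "(\<lambda>k. h k u) sums (of_int \<lfloor>1 / (real m * u)\<rfloor> * of_real u powr (s - 1))"
    if "u \<in> {0..1}" for u
    using floor_inv_mult_powr_sums[OF m, of u "s - 1"] that by (simp add: h_def c_def)
  have h_norm_summable: "summable (\<lambda>k. norm (h k u))" if "u \<in> {0..1}" for u
  proof -
    have "(\<lambda>k. norm (h k u)) = (\<lambda>k. if u \<le> c k then u powr (Re s - 1) else 0)"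
      using that by (simp add: h_def fun_eq_iff norm_powr_real_powr)
    then show ?thesis
      using floor_inv_mult_powr_sums[OF m, of u "Re s - 1"] that by (simp add: c_def sums_iff cong: if_cong)
  qed
  have "summable (\<lambda>k. integral {0..1} (\<lambda>u. norm (h k u)))"
  proof (rule summable_comparison_test')
    show "summable (\<lambda>k. real (Suc k) powr - Re s / Re s)"
      using s by (intro summable_divide summable_Suc_powr_neg)
    have "c k powr Re s / Re s \<le> (1 / real (Suc k)) powr Re s / Re s" for k
      using c_pos[of k] c_le[of k] s by (intro divide_right_mono powr_mono2) auto
    then show "norm (integral {0..1} (\<lambda>u. norm (h k u))) \<le> real (Suc k) powr - Re s / Re s" for k
      using integral_unique[OF norm_h_int] s
      by (simp add: powr_divide powr_minus_divide del: of_nat_Suc)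
  qed
  moreover have "h k absolutely_integrable_on {0..1}" for k
    using h_int norm_h_int by (auto simp: absolutely_integrable_on_def)
  ultimately have "((\<lambda>u. \<Sum>k. h k u) has_integral (\<Sum>k. of_real (c k) powr s / s)) {0..1}"
    using h_int h_norm_summable by (intro has_integral_suminf)
  moreover have "(\<lambda>k. of_real (c k) powr s / s) sums (zeta s / (of_nat m powr s * s))"
    using sums_divide[OF sums_zeta_div_powr[OF m s], of s] by (simp add: c_def)
  ultimately have "((\<lambda>u. \<Sum>k. h k u) has_integral zeta s / (of_nat m powr s * s)) {0..1}"
    by (simp add: sums_iff)
  then show ?thesis
    by (rule has_integral_eq[rotated]) (simp add: h_sums[THEN sums_unique, symmetric])
qed

lemma frac_le_self: "x \<ge> 0 \<Longrightarrow> frac x \<le> x"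
  by (simp add: frac_def)

lemma norm_frac_inv_mult_powr_le:
  fixes s :: complex
  assumes m: "m > 0" and u: "u \<ge> 0"
  shows "norm (of_real (frac (1 / (real m * u))) * of_real u powr (s - 1)) \<le> u powr (Re s - 2) / real m"
proof (cases "u = 0")
  case False
  with u have "u > 0"
    by simp
  have "norm (of_real (frac (1 / (real m * u))) * of_real u powr (s - 1))
          = frac (1 / (real m * u)) * u powr (Re s - 1)"
    using u by (simp add: norm_mult norm_powr_real_powr)
  also have "\<dots> \<le> 1 / (real m * u) * u powr (Re s - 1)"
    using u by (intro mult_right_mono frac_le_self) auto
  also have "\<dots> = u powr (Re s - 2) / real m"
    using \<open>u > 0\<close> m by (simp add: powr_diff field_simps power2_eq_square)
  finally show ?thesis .
qed simp

lemma has_integral_frac_inv_mult: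
  fixes s :: complex
  assumes m: "m > 0" and s: "Re s > 1"
  shows "((\<lambda>u. of_real (frac (1 / (real m * u))) * of_real u powr (s - 1))
           has_integral 1 / (of_nat m * (s - 1)) - zeta s / (of_nat m powr s * s)) {0..1}"
proof -
  have "((\<lambda>u. of_real u powr (s - 2) / of_nat m) has_integral 1 / (s - 1) / of_nat m) {0..1}"
    using has_integral_cpow_from_0[of "s - 2" 1] s by (intro has_integral_divide) (simp add: algebra_simps)
  from has_integral_diff[OF this has_integral_floor_inv_mult[OF m s]]
  have "((\<lambda>u. of_real u powr (s - 2) / of_nat m - of_int \<lfloor>1 / (real m * u)\<rfloor> * of_real u powr (s - 1))
          has_integral 1 / (of_nat m * (s - 1)) - zeta s / (of_nat m powr s * s)) {0..1}"
    by (simp add: mult.commute)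
  moreover have "of_real u powr (s - 2) / of_nat m - of_int \<lfloor>1 / (real m * u)\<rfloor> * of_real u powr (s - 1)
                   = of_real (frac (1 / (real m * u))) * of_real u powr (s - 1)" if "u \<ge> 0" for u
  proof (cases "u = 0")
    case False
    have "of_real u powr (s - 1) = of_real u powr (s - 2) * (of_real u :: complex)"
      using powr_add[of "complex_of_real u" "s - 2" 1] by simp
    with False show ?thesis
      by (simp add: frac_def field_simps)
  qed simp
  ultimately show ?thesis
    by (rule has_integral_eq[rotated]) simp
qed

lemma
  fixes s :: complex
  assumes m: "m > 0" and s: "Re s > 1"
  shows absolutely_integrable_frac_inv_mult:
          "(\<lambda>u. of_real (frac (1 / (real m * u))) * of_real u powr (s - 1)) absolutely_integrable_on {0..1}"
    and integral_norm_frac_inv_mult_le: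
          "integral {0..1} (\<lambda>u. norm (of_real (frac (1 / (real m * u))) * of_real u powr (s - 1)))
             \<le> 1 / (real m * (Re s - 1))"
proof -
  let ?G = "\<lambda>u. of_real (frac (1 / (real m * u))) * of_real u powr (s - 1)"
  have "((\<lambda>u. u powr (Re s - 2)) has_integral 1 / (Re s - 1)) {0..1}"
    using has_integral_powr_from_0[of "Re s - 2" 1] s by simp
  from has_integral_divide[OF this, of "real m"]
  have bound_int: "((\<lambda>u. u powr (Re s - 2) / real m) has_integral 1 / (real m * (Re s - 1))) {0..1}"
    by (simp add: mult.commute)
  show abs_int: "?G absolutely_integrable_on {0..1}"
    using norm_frac_inv_mult_powr_le[OF m] has_integral_frac_inv_mult[OF m s] bound_int
    by (intro absolutely_integrable_integrable_bound[where g = "\<lambda>u. u powr (Re s - 2) / real m"])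
       (auto simp: has_integral_integrable)
  have "integral {0..1} (\<lambda>u. norm (?G u)) \<le> integral {0..1} (\<lambda>u. u powr (Re s - 2) / real m)"
    using abs_int bound_int norm_frac_inv_mult_powr_le[OF m]
    by (intro integral_le) (auto simp: absolutely_integrable_on_def has_integral_integrable)
  then show "integral {0..1} (\<lambda>u. norm (?G u)) \<le> 1 / (real m * (Re s - 1))"
    using integral_unique[OF bound_int] by simp
qed

lemma summable_frac_series:
  fixes c :: "nat \<Rightarrow> real"
  assumes "summable (\<lambda>n. \<bar>c n\<bar> / real (Suc n))" and "u \<ge> 0"
  shows "summable (\<lambda>n. c n * frac (1 / (real (Suc n) * u)))"
proof (rule summable_comparison_test')
  show "summable (\<lambda>n. 1 / u * (\<bar>c n\<bar> / real (Suc n)))"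
    using assms(1) by (rule summable_mult)
  show "norm (c n * frac (1 / (real (Suc n) * u))) \<le> 1 / u * (\<bar>c n\<bar> / real (Suc n))" for n
    using assms(2) mult_left_mono[OF frac_le_self[of "1 / (real (Suc n) * u)"], of "\<bar>c n\<bar>"]
    by (simp add: abs_mult field_simps)
qed

lemma has_integral_frac_series:
  fixes c :: "nat \<Rightarrow> real" and s :: complex
  assumes c: "summable (\<lambda>n. \<bar>c n\<bar> / real (Suc n))" and s: "Re s > 1"
  shows "((\<lambda>u. of_real (\<Sum>n. c n * frac (1 / (real (Suc n) * u))) * of_real u powr (s - 1))
           has_integral
           (\<Sum>n. of_real (c n) * (1 / (of_nat (Suc n) * (s - 1)) - zeta s / (of_nat (Suc n) powr s * s))))
         {0..1}"
proof -
  define f where "f n u = of_real (c n) * (of_real (frac (1 / (real (Suc n) * u))) * of_real u powr (s - 1))"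
    for n u
  have f_abs_int: "f n absolutely_integrable_on {0..1}" for n
    unfolding f_def using s by (intro set_integrable_mult_right absolutely_integrable_frac_inv_mult) auto
  have f_int: "(f n has_integral of_real (c n) * (1 / (of_nat (Suc n) * (s - 1)) - zeta s / (of_nat (Suc n) powr s * s))) {0..1}" for n
    unfolding f_def using s by (intro has_integral_mult_right has_integral_frac_inv_mult) auto
  have "summable (\<lambda>n. norm (f n u))" if "u \<in> {0..1}" for u
  proof (rule summable_comparison_test')
    show "summable (\<lambda>n. u powr (Re s - 2) * (\<bar>c n\<bar> / real (Suc n)))"
      using c by (rule summable_mult)
    show "norm (norm (f n u)) \<le> u powr (Re s - 2) * (\<bar>c n\<bar> / real (Suc n))" for n
      using that mult_left_mono[OF norm_frac_inv_mult_powr_le[of "Suc n" u s], of "\<bar>c n\<bar>"]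
      by (simp add: f_def norm_mult mult_ac)
  qed
  moreover have "summable (\<lambda>n. integral {0..1} (\<lambda>u. norm (f n u)))"
  proof (rule summable_comparison_test')
    show "summable (\<lambda>n. 1 / (Re s - 1) * (\<bar>c n\<bar> / real (Suc n)))"
      using c by (rule summable_mult)
    show "norm (integral {0..1} (\<lambda>u. norm (f n u))) \<le> 1 / (Re s - 1) * (\<bar>c n\<bar> / real (Suc n))" for n
    proof -
      have "integral {0..1} (\<lambda>u. norm (f n u))
              = \<bar>c n\<bar> * integral {0..1} (\<lambda>u. norm (of_real (frac (1 / (real (Suc n) * u))) * of_real u powr (s - 1)))"
        by (simp add: f_def norm_mult)
      moreover have "0 \<le> integral {0..1} (\<lambda>u. norm (f n u))"
        using f_abs_int[of n] by (intro integral_nonneg) (auto simp: absolutely_integrable_on_def)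
      ultimately show ?thesis
        using mult_left_mono[OF integral_norm_frac_inv_mult_le[of "Suc n" s], of "\<bar>c n\<bar>"] s
        by (simp add: field_simps)
    qed
  qed
  ultimately have "((\<lambda>u. \<Sum>n. f n u) has_integral
      (\<Sum>n. of_real (c n) * (1 / (of_nat (Suc n) * (s - 1)) - zeta s / (of_nat (Suc n) powr s * s)))) {0..1}"
    using f_abs_int f_int by (intro has_integral_suminf)
  moreover have "(\<Sum>n. f n u) = of_real (\<Sum>n. c n * frac (1 / (real (Suc n) * u))) * of_real u powr (s - 1)"
    if "u \<ge> 0" for u
    using sums_mult2[OF sums_of_real[OF summable_sums[OF summable_frac_series[OF c that]]],
                     of "of_real u powr (s - 1) :: complex"]
    by (simp add: f_def sums_iff mult.assoc)
  ultimately show ?thesis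
    by (rule has_integral_eq[rotated]) simp
qed

lemma moebius_frac_coefficients_sums:
  fixes \<epsilon> :: real and s :: complex
  assumes "\<epsilon> > 0" and "Re s > 1"
  shows "(\<lambda>n. of_real (moebius_mu (Suc n) / real (Suc n) powr \<epsilon>)
              * (1 / (of_nat (Suc n) * (s - 1)) - zeta s / (of_nat (Suc n) powr s * s)))
         sums (1 / zeta (1 + of_real \<epsilon>) * (1 / (s - 1)) - 1 / zeta (s + of_real \<epsilon>) * (zeta s / s))"
proof -
  have shift: "(of_nat (Suc n) :: complex) powr (w + of_real \<epsilon>) = of_nat (Suc n) powr w * of_real (real (Suc n) powr \<epsilon>)"
    for n w
    using powr_of_real[of "real (Suc n)" \<epsilon>] by (simp add: powr_add del: of_nat_Suc)
  have field_identity: "a / e * (1 / (x * d) - z / (y * t)) = a / (x * e) * (1 / d) - a / (y * e) * (z / t)"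
    for a e x d z y t :: complex
    by (simp add: divide_inverse inverse_mult_distrib algebra_simps)
  have "of_real (moebius_mu (Suc n) / real (Suc n) powr \<epsilon>)
          * (1 / (of_nat (Suc n) * (s - 1)) - zeta s / (of_nat (Suc n) powr s * s))
        = of_real (moebius_mu (Suc n)) / of_nat (Suc n) powr (1 + of_real \<epsilon>) * (1 / (s - 1))
          - of_real (moebius_mu (Suc n)) / of_nat (Suc n) powr (s + of_real \<epsilon>) * (zeta s / s)" for n
    by (simp only: shift powr_to_1 of_real_divide field_identity)
  then show ?thesis
    using assms by (simp only:) (intro sums_diff sums_mult2 moebius_sums; simp)
qed

theorem mainTheorem4:
  fixes \<epsilon> :: real and s :: complex
  assumes "\<epsilon> > 0" and "Re s > 1"
  shows "((\<lambda>u. complex_of_real (f_eps \<epsilon> u) * complex_of_real u powr (s - 1))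
            has_integral
          (1 / zeta (1 + complex_of_real \<epsilon>) * (1 / (s - 1))
           - 1 / zeta (s + complex_of_real \<epsilon>) * (zeta s / s))) {0..1}"
proof -
  define c where "c n = moebius_mu (Suc n) / real (Suc n) powr \<epsilon>" for n
  have "\<bar>c n\<bar> / real (Suc n) \<le> real (Suc n) powr - (1 + \<epsilon>)" for n
  proof -
    have "\<bar>c n\<bar> / real (Suc n) \<le> 1 / real (Suc n) powr \<epsilon> / real (Suc n)"
      by (intro divide_right_mono) (auto simp: c_def moebius_mu_def abs_div)
    also have "\<dots> = real (Suc n) powr - (1 + \<epsilon>)"
      by (subst powr_minus_divide) (simp add: powr_add mult.commute del: of_nat_Suc)
    finally show ?thesis .
  qed
  then have "summable (\<lambda>n. \<bar>c n\<bar> / real (Suc n))"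
    using assms(1) by (intro summable_comparison_test'[OF summable_Suc_powr_neg[of "1 + \<epsilon>"]]) auto
  from has_integral_frac_series[OF this assms(2)] show ?thesis
    using sums_unique[OF moebius_frac_coefficients_sums[OF assms]]
    by (simp add: c_def f_eps_def)
qed

end
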